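(* Let $n\ge2$, $k\in\{1,\dots,n\}$ and let $W_1,\dots,W_n$ be the Pauli strings on $n-1$ qubits defined in the context. For $1\le m<k$ let $G_m=iW_{m+1}W_m$, and for $k\le m<n$ let $G_m=iW_mW_{m+1}$; for any real $\theta$ let $R_m=\exp(-i\theta G_m/2)$. Then for $1\le m<k$ we have $R_mW_jR_m^\dagger=W_j$ for every $j$ with $m+1<j\le n$; and for $k\le m<n$ we have $R_mW_jR_m^\dagger=W_j$ for every $j$ with $1\le j<k$.
   Context: $X_j,Y_j,Z_j$ are Pauli operators on qubit $j$ of an $(n-1)$-qubit system; empty products of $Z$'s are the identity. For $k\ne n$: for $1\le j<k$, $W_j=Y_jZ_{j+1}\cdots Z_{k-1}Y_k$; $W_k=Z_k$; for $k<j<n$, $W_j=X_kZ_{k+1}\cdots Z_{j-1}X_j$; and $W_n=X_kZ_{k+1}\cdots Z_{n-1}$. For $k=n$: for $1\le j<n$, $W_j=-Z_1Z_2\cdots Z_{j-1}X_j$; $W_n=\prod_{j=1}^{n-1}Z_j$. *)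

theory Defs
  imports Complex_Main "Jordan_Normal_Form.Matrix"
begin

(* Operators on N qubits are 2^N x 2^N complex matrices; qubit 1 is the leftmost tensor factor. *)

definition kron :: "complex mat \<Rightarrow> complex mat \<Rightarrow> complex mat" where
  "kron A B = mat (dim_row A * dim_row B) (dim_col A * dim_col B)
     (\<lambda>(i,j). A $$ (i div dim_row B, j div dim_col B) * B $$ (i mod dim_row B, j mod dim_col B))"

definition pauliX :: "complex mat" where
  "pauliX = mat_of_rows_list 2 [[0, 1], [1, 0]]"
definition pauliY :: "complex mat" where
  "pauliY = mat_of_rows_list 2 [[0, -\<i>], [\<i>, 0]]"
definition pauliZ :: "complex mat" where
  "pauliZ = mat_of_rows_list 2 [[1, 0], [0, -1]]"

definition op_at :: "nat \<Rightarrow> nat \<Rightarrow> complex mat \<Rightarrow> complex mat" where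
  "op_at N j A = kron (kron (1\<^sub>m (2 ^ (j - 1))) A) (1\<^sub>m (2 ^ (N - j)))"

definition Xq :: "nat \<Rightarrow> nat \<Rightarrow> complex mat" where "Xq N j = op_at N j pauliX"
definition Yq :: "nat \<Rightarrow> nat \<Rightarrow> complex mat" where "Yq N j = op_at N j pauliY"
definition Zq :: "nat \<Rightarrow> nat \<Rightarrow> complex mat" where "Zq N j = op_at N j pauliZ"

definition Zprod :: "nat \<Rightarrow> nat \<Rightarrow> nat \<Rightarrow> complex mat" where
  "Zprod N a b = foldr (\<lambda>j M. Zq N j * M) [a..<b] (1\<^sub>m (2 ^ N))"

definition W :: "nat \<Rightarrow> nat \<Rightarrow> nat \<Rightarrow> complex mat" where
  "W n k j = (let N = n - 1 in
     if k \<noteq> n then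
       (if j < k then Yq N j * Zprod N (j + 1) k * Yq N k
        else if j = k then Zq N k
        else if j < n then Xq N k * Zprod N (k + 1) j * Xq N j
        else Xq N k * Zprod N (k + 1) n)
     else
       (if j < n then - (Zprod N 1 j * Xq N j)
        else Zprod N 1 n))"

definition mexp :: "complex mat \<Rightarrow> complex mat" where
  "mexp A = mat (dim_row A) (dim_col A) (\<lambda>(i,j). \<Sum>t. (A ^\<^sub>m t) $$ (i,j) / of_nat (fact t))"

definition dagger :: "complex mat \<Rightarrow> complex mat" where
  "dagger A = mat (dim_col A) (dim_row A) (\<lambda>(i,j). cnj (A $$ (j,i)))"

definition Gen :: "nat \<Rightarrow> nat \<Rightarrow> nat \<Rightarrow> complex mat" where
  "Gen n k m = (if m < k then \<i> \<cdot>\<^sub>m (W n k (m + 1) * W n k m)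
                else \<i> \<cdot>\<^sub>m (W n k m * W n k (m + 1)))"

definition Rot :: "nat \<Rightarrow> nat \<Rightarrow> real \<Rightarrow> nat \<Rightarrow> complex mat" where
  "Rot n k \<theta> m = mexp ((- \<i> * complex_of_real \<theta> / 2) \<cdot>\<^sub>m Gen n k m)"

end

theory Submission
  imports Defs
begin

text \<open>
  The operators \<open>W\<^sub>1, \<dots>, W\<^sub>n\<close> are, up to sign, Pauli strings, and any two of them
  carry non-commuting Pauli matrices on exactly one qubit. Hence they are Hermitian involutions
  that pairwise anticommute. For anticommuting Hermitian involutions \<open>A, B\<close> the matrix
  \<open>J = A B\<close> satisfies \<open>J\<^sup>2 = -1\<close> and \<open>J\<^sup>\<dagger> = -J\<close>, and the rotation generated by
  \<open>i A B\<close> is \<open>exp (\<theta>/2 \<cdot> J) = cos (\<theta>/2) + sin (\<theta>/2) J\<close>, a unitary. A matrix that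
  anticommutes with both \<open>A\<close> and \<open>B\<close> commutes with \<open>J\<close>, hence with the rotation, so
  conjugation fixes it. This applies to \<open>W\<^sub>j\<close> for every \<open>j\<close> outside \<open>{m, m + 1}\<close>.
\<close>

lemma smult_smult_mat: "a \<cdot>\<^sub>m (b \<cdot>\<^sub>m A) = (a * b :: 'a :: semigroup_mult) \<cdot>\<^sub>m A"
  by (rule eq_matI) (auto simp: mult.assoc)

lemma one_smult_mat [simp]: "(1 :: 'a :: monoid_mult) \<cdot>\<^sub>m A = A"
  by (rule eq_matI) auto

lemma uminus_eq_smult_mat: "- A = (-1 :: 'a :: ring_1) \<cdot>\<^sub>m A"
  by (rule eq_matI) auto

lemma smult_mult_smult_mat:
  "A \<in> carrier_mat r m \<Longrightarrow> B \<in> carrier_mat m c \<Longrightarrow>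
   (a \<cdot>\<^sub>m A) * (b \<cdot>\<^sub>m B) = (a * b :: complex) \<cdot>\<^sub>m (A * B)"
  by (simp add: mult_smult_assoc_mat[of A r m _ c] mult_smult_distrib[of A r m B c] smult_smult_mat)

lemma dagger_smult: "dagger (x \<cdot>\<^sub>m A) = cnj x \<cdot>\<^sub>m dagger A"
  by (rule eq_matI) (auto simp: dagger_def)

lemma dagger_mult:
  "A \<in> carrier_mat r m \<Longrightarrow> B \<in> carrier_mat m c \<Longrightarrow> dagger (A * B) = dagger B * dagger A"
  by (rule eq_matI) (auto simp: dagger_def scalar_prod_def mult.commute intro!: sum.cong)

lemma dagger_add:
  "A \<in> carrier_mat r c \<Longrightarrow> B \<in> carrier_mat r c \<Longrightarrow> dagger (A + B) = dagger A + dagger B"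
  by (rule eq_matI) (auto simp: dagger_def)

lemma dagger_one: "dagger (1\<^sub>m D) = 1\<^sub>m D"
  by (rule eq_matI) (auto simp: dagger_def)

lemma sum_lessThan_mult_div_mod:
  "(\<Sum>l<b * d. g (l div d) (l mod d)) = (\<Sum>x<b. \<Sum>y<d. g x y)" for d :: nat
proof -
  have "(\<Sum>l<b * d. g (l div d) (l mod d)) = (\<Sum>x<b. \<Sum>y<d. g ((y + x * d) div d) ((y + x * d) mod d))"
    using sum.nat_group[of "\<lambda>l. g (l div d) (l mod d)" d b]
    by (simp add: sum.shift_bounds_nat_ivl[of _ 0 "x * d" d for x, simplified] lessThan_atLeast0 add.commute)
  also have "\<dots> = (\<Sum>x<b. \<Sum>y<d. g x y)"
    by (intro sum.cong) auto
  finally show ?thesis .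
qed

lemma div_less_of_less_mult: "i < a * c \<Longrightarrow> i div c < a" for i :: nat
  by (simp add: less_mult_imp_div_less)

lemma mod_less_of_less_mult: "i < a * c \<Longrightarrow> i mod c < c" for i :: nat
  by (cases "c = 0") auto

lemma dim_kron [simp]:
  "dim_row (kron A B) = dim_row A * dim_row B" "dim_col (kron A B) = dim_col A * dim_col B"
  unfolding kron_def by auto

lemma kron_carrier_mat:
  "A \<in> carrier_mat a b \<Longrightarrow> B \<in> carrier_mat c d \<Longrightarrow> kron A B \<in> carrier_mat (a * c) (b * d)"
  by auto

lemma index_kron:
  "i < dim_row A * dim_row B \<Longrightarrow> j < dim_col A * dim_col B \<Longrightarrow>
   kron A B $$ (i, j) = A $$ (i div dim_row B, j div dim_col B) * B $$ (i mod dim_row B, j mod dim_col B)"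
  unfolding kron_def by auto

lemmas index_kron_simps = index_kron div_less_of_less_mult mod_less_of_less_mult

lemma mult_kron:
  assumes A: "A \<in> carrier_mat a b" and B: "B \<in> carrier_mat c d"
    and C: "C \<in> carrier_mat b e" and D: "D \<in> carrier_mat d f"
  shows "kron A B * kron C D = kron (A * C) (B * D)"
proof (rule eq_matI)
  fix i j assume "i < dim_row (kron (A * C) (B * D))" and "j < dim_col (kron (A * C) (B * D))"
  hence i: "i < a * c" and j: "j < e * f" using A B C D by auto
  have "(kron A B * kron C D) $$ (i, j) = (\<Sum>l<b * d. A $$ (i div c, l div d) * B $$ (i mod c, l mod d) *
      (C $$ (l div d, j div f) * D $$ (l mod d, j mod f)))"
    using A B C D i j by (auto simp: scalar_prod_def index_kron_simps lessThan_atLeast0 intro!: sum.cong)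
  also have "\<dots> = (\<Sum>x<b. \<Sum>y<d. A $$ (i div c, x) * B $$ (i mod c, y) *
      (C $$ (x, j div f) * D $$ (y, j mod f)))"
    by (rule sum_lessThan_mult_div_mod[where g = "\<lambda>x y. A $$ (i div c, x) * B $$ (i mod c, y) *
      (C $$ (x, j div f) * D $$ (y, j mod f))"])
  also have "\<dots> = (\<Sum>x<b. A $$ (i div c, x) * C $$ (x, j div f)) * (\<Sum>y<d. B $$ (i mod c, y) * D $$ (y, j mod f))"
    by (simp add: sum_product ac_simps)
  also have "\<dots> = kron (A * C) (B * D) $$ (i, j)"
    using A B C D i j by (auto simp: scalar_prod_def index_kron_simps lessThan_atLeast0)
  finally show "(kron A B * kron C D) $$ (i, j) = kron (A * C) (B * D) $$ (i, j)" .
qed (use A B C D in auto)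

lemma mod_mult_div_eq_div_mod: "0 < c \<Longrightarrow> x mod (b * c) div c = x div c mod b" for x :: nat
  by (simp add: mod_mult2_eq mult.commute[of b c])

lemma kron_assoc: "kron (kron A B) C = kron A (kron B C)"
proof (rule eq_matI)
  fix i j assume "i < dim_row (kron A (kron B C))" and "j < dim_col (kron A (kron B C))"
  then have i: "i < dim_row A * dim_row B * dim_row C" and j: "j < dim_col A * dim_col B * dim_col C"
    by (auto simp: ac_simps)
  then have "0 < dim_row C" "0 < dim_col C"
    by (auto intro!: Nat.gr0I)
  moreover have "x div (b * c) = x div c div b" "x mod (b * c) mod c = x mod c" for x b c :: nat
    by (simp_all add: div_mult2_eq mult.commute[of b c] mod_mod_cancel)
  ultimately show "kron (kron A B) C $$ (i, j) = kron A (kron B C) $$ (i, j)"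
    using i j by (simp add: index_kron_simps mod_mult_div_eq_div_mod ac_simps)
qed auto

lemma kron_one: "kron (1\<^sub>m a) (1\<^sub>m b) = 1\<^sub>m (a * b)"
proof (rule eq_matI)
  fix i j assume "i < dim_row (1\<^sub>m (a * b))" and "j < dim_col (1\<^sub>m (a * b))"
  moreover have "(i div b = j div b \<and> i mod b = j mod b) = (i = j)"
    by (metis div_mult_mod_eq)
  ultimately show "kron (1\<^sub>m a) (1\<^sub>m b) $$ (i, j) = 1\<^sub>m (a * b) $$ (i, j)"
    by (auto simp: index_kron_simps)
qed auto

lemma kron_one_1_right: "kron A (1\<^sub>m 1) = A"
  by (rule eq_matI) (auto simp: index_kron)

lemma kron_smult_left: "kron (x \<cdot>\<^sub>m A) B = x \<cdot>\<^sub>m kron A B"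
  by (rule eq_matI) (auto simp: index_kron_simps)

lemma kron_smult_right: "kron A (x \<cdot>\<^sub>m B) = x \<cdot>\<^sub>m kron A B"
  by (rule eq_matI) (auto simp: index_kron_simps)

lemma dagger_kron: "dagger (kron A B) = kron (dagger A) (dagger B)"
  by (rule eq_matI) (auto simp: dagger_def index_kron_simps)

fun kron_prod :: "nat \<Rightarrow> (nat \<Rightarrow> complex mat) \<Rightarrow> complex mat" where
  "kron_prod 0 f = 1\<^sub>m 1"
| "kron_prod (Suc N) f = kron (kron_prod N f) (f (Suc N))"

lemma kron_prod_cong:
  "(\<And>q. 1 \<le> q \<Longrightarrow> q \<le> N \<Longrightarrow> f q = g q) \<Longrightarrow> kron_prod N f = kron_prod N g"
  by (induction N) auto

lemma kron_prod_carrier: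
  "(\<And>q. 1 \<le> q \<Longrightarrow> q \<le> N \<Longrightarrow> f q \<in> carrier_mat d d) \<Longrightarrow>
   kron_prod N f \<in> carrier_mat (d ^ N) (d ^ N)"
proof (induction N)
  case (Suc N)
  then have "kron_prod N f \<in> carrier_mat (d ^ N) (d ^ N)" and "f (Suc N) \<in> carrier_mat d d"
    by auto
  from kron_carrier_mat[OF this] show ?case
    by (simp add: mult.commute)
qed simp

lemma mult_kron_prod:
  assumes "\<And>q. 1 \<le> q \<Longrightarrow> q \<le> N \<Longrightarrow> f q \<in> carrier_mat d d"
    and "\<And>q. 1 \<le> q \<Longrightarrow> q \<le> N \<Longrightarrow> g q \<in> carrier_mat d d"
  shows "kron_prod N f * kron_prod N g = kron_prod N (\<lambda>q. f q * g q)"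
  using assms
proof (induction N)
  case (Suc N)
  have F: "kron_prod N f \<in> carrier_mat (d ^ N) (d ^ N)" and G: "kron_prod N g \<in> carrier_mat (d ^ N) (d ^ N)"
    using Suc.prems by (auto intro!: kron_prod_carrier)
  have "f (Suc N) \<in> carrier_mat d d" and "g (Suc N) \<in> carrier_mat d d"
    using Suc.prems by auto
  from mult_kron[OF F this(1) G this(2)] show ?case
    using Suc by simp
qed simp

lemma kron_prod_one: "kron_prod N (\<lambda>_. 1\<^sub>m d) = 1\<^sub>m (d ^ N)"
  by (induction N) (auto simp: kron_one mult.commute)

lemma kron_prod_smult: "kron_prod N (\<lambda>q. c q \<cdot>\<^sub>m f q) = (\<Prod>q = 1..N. c q) \<cdot>\<^sub>m kron_prod N f"
  by (induction N) (auto simp: kron_smult_left kron_smult_right smult_smult_mat prod.nat_ivl_Suc' mult.commute)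

lemma dagger_kron_prod: "dagger (kron_prod N f) = kron_prod N (\<lambda>q. dagger (f q))"
proof (induction N)
  case 0
  show ?case by (rule eq_matI) (auto simp: dagger_def)
qed (simp add: dagger_kron)

lemma op_at_eq_kron_prod:
  assumes "1 \<le> j" "j \<le> N"
  shows "op_at N j A = kron_prod N (\<lambda>q. if q = j then A else 1\<^sub>m 2)"
  using assms
proof (induction N)
  case (Suc N)
  show ?case
  proof (cases "j = Suc N")
    case True
    then have "kron_prod N (\<lambda>q. if q = j then A else 1\<^sub>m 2) = 1\<^sub>m (2 ^ N)"
      by (simp add: kron_prod_cong[of N _ "\<lambda>_. 1\<^sub>m 2"] kron_prod_one)
    with True show ?thesis
      \<comment> \<open>\<open>[simplified]\<close>: with these imports the simplifier normalises \<open>1 :: nat\<close> to \<open>Suc 0\<close>\<close>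
      by (simp add: op_at_def kron_one_1_right[simplified])
  next
    case False
    then have "kron_prod (Suc N) (\<lambda>q. if q = j then A else 1\<^sub>m 2) = kron (op_at N j A) (1\<^sub>m 2)"
      using Suc by simp
    also have "\<dots> = op_at (Suc N) j A"
      using False Suc.prems by (simp add: op_at_def kron_assoc kron_one Suc_diff_le mult.commute)
    finally show ?thesis ..
  qed
qed simp

datatype pauli = PI | PX | PY | PZ

fun pauli_mat :: "pauli \<Rightarrow> complex mat" where
  "pauli_mat PI = 1\<^sub>m 2"
| "pauli_mat PX = pauliX"
| "pauli_mat PY = pauliY"
| "pauli_mat PZ = pauliZ"

definition pauli_comm_sign :: "pauli \<Rightarrow> pauli \<Rightarrow> complex" where
  "pauli_comm_sign a b = (if a = PI \<or> b = PI \<or> a = b then 1 else -1)"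

lemma pauli_mat_carrier [simp]: "pauli_mat a \<in> carrier_mat 2 2"
  by (cases a) (auto simp: pauliX_def pauliY_def pauliZ_def mat_of_rows_list_def)

lemma pauli_mat_commute: "pauli_mat a * pauli_mat b = pauli_comm_sign a b \<cdot>\<^sub>m (pauli_mat b * pauli_mat a)"
  by (cases a; cases b; rule eq_matI;
      auto simp: pauli_comm_sign_def pauliX_def pauliY_def pauliZ_def mat_of_rows_list_def
        scalar_prod_def numeral_2_eq_2 less_Suc_eq)

lemma pauli_mat_square: "pauli_mat a * pauli_mat a = 1\<^sub>m 2"
  by (cases a; rule eq_matI;
      auto simp: pauliX_def pauliY_def pauliZ_def mat_of_rows_list_def scalar_prod_def numeral_2_eq_2 less_Suc_eq)

lemma dagger_pauli_mat: "dagger (pauli_mat a) = pauli_mat a"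
  by (cases a; rule eq_matI;
      auto simp: dagger_def pauliX_def pauliY_def pauliZ_def mat_of_rows_list_def numeral_2_eq_2 less_Suc_eq)

definition pauli_string :: "nat \<Rightarrow> (nat \<Rightarrow> pauli) \<Rightarrow> complex mat" where
  "pauli_string N F = kron_prod N (\<lambda>q. pauli_mat (F q))"

lemma pauli_string_carrier [simp]: "pauli_string N F \<in> carrier_mat (2 ^ N) (2 ^ N)"
  unfolding pauli_string_def by (rule kron_prod_carrier) simp

lemma pauli_string_cong:
  "(\<And>q. 1 \<le> q \<Longrightarrow> q \<le> N \<Longrightarrow> F q = G q) \<Longrightarrow> pauli_string N F = pauli_string N G"
  unfolding pauli_string_def by (rule kron_prod_cong) simp

lemma mult_pauli_string:
  "pauli_string N F * pauli_string N G = kron_prod N (\<lambda>q. pauli_mat (F q) * pauli_mat (G q))"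
  unfolding pauli_string_def by (rule mult_kron_prod[where d = 2]) auto

lemma pauli_string_square: "pauli_string N F * pauli_string N F = 1\<^sub>m (2 ^ N)"
  by (simp add: mult_pauli_string pauli_mat_square kron_prod_one)

lemma dagger_pauli_string: "dagger (pauli_string N F) = pauli_string N F"
  by (simp add: pauli_string_def dagger_kron_prod dagger_pauli_mat)

lemma pauli_string_commute:
  "pauli_string N F * pauli_string N G
     = (\<Prod>q = 1..N. pauli_comm_sign (F q) (G q)) \<cdot>\<^sub>m (pauli_string N G * pauli_string N F)"
proof -
  have "pauli_string N F * pauli_string N G
      = kron_prod N (\<lambda>q. pauli_comm_sign (F q) (G q) \<cdot>\<^sub>m (pauli_mat (G q) * pauli_mat (F q)))"
    unfolding mult_pauli_string by (intro kron_prod_cong) (rule pauli_mat_commute)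
  then show ?thesis
    by (simp add: kron_prod_smult mult_pauli_string)
qed

lemma pauli_string_mult_disjoint:
  assumes "\<And>q. F q = PI \<or> G q = PI"
  shows "pauli_string N F * pauli_string N G = pauli_string N (\<lambda>q. if F q = PI then G q else F q)"
proof -
  have "pauli_mat (F q) * pauli_mat (G q) = pauli_mat (if F q = PI then G q else F q)" for q
    using assms[of q] by (auto simp: left_mult_one_mat[OF pauli_mat_carrier] right_mult_one_mat[OF pauli_mat_carrier])
  then show ?thesis
    unfolding mult_pauli_string by (simp add: pauli_string_def)
qed

lemma op_at_pauli_mat:
  "1 \<le> j \<Longrightarrow> j \<le> N \<Longrightarrow> op_at N j (pauli_mat P) = pauli_string N (\<lambda>q. if q = j then P else PI)"
  unfolding pauli_string_def by (simp add: op_at_eq_kron_prod) (intro kron_prod_cong; simp)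

lemma Xq_eq_pauli_string: "1 \<le> j \<Longrightarrow> j \<le> N \<Longrightarrow> Xq N j = pauli_string N (\<lambda>q. if q = j then PX else PI)"
  using op_at_pauli_mat[of j N PX] by (simp add: Xq_def)

lemma Yq_eq_pauli_string: "1 \<le> j \<Longrightarrow> j \<le> N \<Longrightarrow> Yq N j = pauli_string N (\<lambda>q. if q = j then PY else PI)"
  using op_at_pauli_mat[of j N PY] by (simp add: Yq_def)

lemma Zq_eq_pauli_string: "1 \<le> j \<Longrightarrow> j \<le> N \<Longrightarrow> Zq N j = pauli_string N (\<lambda>q. if q = j then PZ else PI)"
  using op_at_pauli_mat[of j N PZ] by (simp add: Zq_def)

lemma Zprod_eq_pauli_string:
  "1 \<le> a \<Longrightarrow> b \<le> Suc N \<Longrightarrow> Zprod N a b = pauli_string N (\<lambda>q. if a \<le> q \<and> q < b then PZ else PI)"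
proof (induction "b - a" arbitrary: a)
  case 0
  then have "Zprod N a b = pauli_string N (\<lambda>_. PI)"
    by (simp add: Zprod_def pauli_string_def kron_prod_one)
  also have "\<dots> = pauli_string N (\<lambda>q. if a \<le> q \<and> q < b then PZ else PI)"
    using 0 by (intro pauli_string_cong) auto
  finally show ?case .
next
  case (Suc d)
  then have "Zprod N a b = Zq N a * Zprod N (Suc a) b"
    by (simp add: Zprod_def upt_conv_Cons)
  also have "\<dots> = pauli_string N (\<lambda>q. if a \<le> q \<and> q < b then PZ else PI)"
    using Suc by (simp add: Zq_eq_pauli_string pauli_string_mult_disjoint) (intro pauli_string_cong; auto)
  finally show ?case .
qed

definition W_label :: "nat \<Rightarrow> nat \<Rightarrow> nat \<Rightarrow> nat \<Rightarrow> pauli" where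
  "W_label n k a q =
     (if k \<noteq> n then
        (if a < k then (if q = a \<or> q = k then PY else if a < q \<and> q < k then PZ else PI)
         else if a = k then (if q = k then PZ else PI)
         else (if q = k \<or> q = a then PX else if k < q \<and> q < a then PZ else PI))
      else (if q < a then PZ else if q = a then PX else PI))"

definition W_sign :: "nat \<Rightarrow> nat \<Rightarrow> nat \<Rightarrow> complex" where
  "W_sign n k a = (if k = n \<and> a < n then -1 else 1)"

lemma W_eq_pauli_string:
  assumes "2 \<le> n" "1 \<le> k" "k \<le> n" "1 \<le> a" "a \<le> n"
  shows "W n k a = W_sign n k a \<cdot>\<^sub>m pauli_string (n - 1) (W_label n k a)"
  using assms
  by (simp add: W_def Let_def W_sign_def Xq_eq_pauli_string Yq_eq_pauli_string Zq_eq_pauli_string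
      Zprod_eq_pauli_string pauli_string_mult_disjoint uminus_eq_smult_mat)
    (intro conjI impI arg_cong[of _ _ "\<lambda>M. _ \<cdot>\<^sub>m M"] pauli_string_cong; auto simp: W_label_def)

definition W_clash :: "nat \<Rightarrow> nat \<Rightarrow> nat \<Rightarrow> nat \<Rightarrow> nat" where
  "W_clash n k a b = (if k = n then a else if b \<le> k then b else if a \<le> k then k else a)"

lemma pauli_comm_sign_W_label:
  assumes "1 \<le> k" "k \<le> n" "1 \<le> a" "a < b" "b \<le> n" "1 \<le> q" "q \<le> n - 1"
  shows "pauli_comm_sign (W_label n k a q) (W_label n k b q) = (if q = W_clash n k a b then -1 else 1)"
  using assms by (auto simp: pauli_comm_sign_def W_label_def W_clash_def)

lemma prod_pauli_comm_sign_W_label: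
  assumes "1 \<le> k" "k \<le> n" "1 \<le> a" "a < b" "b \<le> n"
  shows "(\<Prod>q = 1..n - 1. pauli_comm_sign (W_label n k a q) (W_label n k b q)) = -1"
proof -
  have "W_clash n k a b \<in> {1..n - 1}"
    using assms by (auto simp: W_clash_def)
  moreover have "(\<Prod>q = 1..n - 1. pauli_comm_sign (W_label n k a q) (W_label n k b q))
      = (\<Prod>q = 1..n - 1. if q = W_clash n k a b then -1 else 1)"
    using assms by (intro prod.cong) (simp_all add: pauli_comm_sign_W_label)
  ultimately show ?thesis
    by (simp add: prod.delta)
qed

context
  fixes n k :: nat
  assumes n: "2 \<le> n" and k: "1 \<le> k" "k \<le> n"
begin

lemma W_carrier: "1 \<le> a \<Longrightarrow> a \<le> n \<Longrightarrow> W n k a \<in> carrier_mat (2 ^ (n - 1)) (2 ^ (n - 1))"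
  using n k by (simp add: W_eq_pauli_string)

lemma W_square: "1 \<le> a \<Longrightarrow> a \<le> n \<Longrightarrow> W n k a * W n k a = 1\<^sub>m (2 ^ (n - 1))"
  using n k
  by (simp add: W_eq_pauli_string smult_mult_smult_mat[OF pauli_string_carrier pauli_string_carrier]
      pauli_string_square W_sign_def)

lemma dagger_W: "1 \<le> a \<Longrightarrow> a \<le> n \<Longrightarrow> dagger (W n k a) = W n k a"
  using n k by (simp add: W_eq_pauli_string dagger_smult dagger_pauli_string W_sign_def)

lemma W_anticommute_less:
  assumes "1 \<le> a" "a < b" "b \<le> n"
  shows "W n k a * W n k b = - (W n k b * W n k a)"
proof -
  have "pauli_string (n - 1) (W_label n k a) * pauli_string (n - 1) (W_label n k b)
      = (-1) \<cdot>\<^sub>m (pauli_string (n - 1) (W_label n k b) * pauli_string (n - 1) (W_label n k a))"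
    using pauli_string_commute[of "n - 1" "W_label n k a" "W_label n k b"]
    unfolding prod_pauli_comm_sign_W_label[OF k assms] .
  then show ?thesis
    using n k assms
    by (simp add: W_eq_pauli_string smult_mult_smult_mat[OF pauli_string_carrier pauli_string_carrier]
        uminus_eq_smult_mat smult_smult_mat mult.commute)
qed

lemma W_anticommute:
  assumes "1 \<le> a" "a \<le> n" "1 \<le> b" "b \<le> n" "a \<noteq> b"
  shows "W n k a * W n k b = - (W n k b * W n k a)"
proof (cases "a < b")
  case True
  then show ?thesis using assms W_anticommute_less by simp
next
  case False
  then have "W n k b * W n k a = - (W n k a * W n k b)"
    using assms W_anticommute_less by simp
  then show ?thesis by simp
qed

end

lemma power_smult_mat_square_minus_one:
  assumes J: "J \<in> carrier_mat D D" and JJ: "J * J = - 1\<^sub>m D"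
  shows "(x \<cdot>\<^sub>m J) ^\<^sub>m t = (x ^ t * (-1) ^ (t div 2) :: complex) \<cdot>\<^sub>m (if even t then 1\<^sub>m D else J)"
proof (induction t)
  case 0
  show ?case using J by auto
next
  case (Suc t)
  have "(x \<cdot>\<^sub>m J) ^\<^sub>m Suc t = ((x ^ t * (-1) ^ (t div 2)) * x) \<cdot>\<^sub>m ((if even t then 1\<^sub>m D else J) * J)"
    using Suc J by (auto simp: mult_smult_distrib mult_smult_assoc_mat smult_smult_mat)
  also have "(if even t then 1\<^sub>m D else J) * J = (if even t then 1 else -1) \<cdot>\<^sub>m (if even (Suc t) then 1\<^sub>m D else J)"
    using J JJ by (auto simp: uminus_eq_smult_mat)
  finally show ?case
    by (auto simp: smult_smult_mat elim!: oddE)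
qed

lemma mexp_smult_square_minus_one:
  assumes J: "J \<in> carrier_mat D D" and JJ: "J * J = - 1\<^sub>m D"
  shows "mexp (x \<cdot>\<^sub>m J) = cos x \<cdot>\<^sub>m 1\<^sub>m D + sin x \<cdot>\<^sub>m J"
proof (rule eq_matI)
  fix i j
  assume "i < dim_row (cos x \<cdot>\<^sub>m 1\<^sub>m D + sin x \<cdot>\<^sub>m J)"
    and "j < dim_col (cos x \<cdot>\<^sub>m 1\<^sub>m D + sin x \<cdot>\<^sub>m J)"
  hence ij: "i < D" "j < D" using J by auto
  define d where "d = (1\<^sub>m D :: complex mat) $$ (i, j)"
  define g where "g = J $$ (i, j)"
  have "((x \<cdot>\<^sub>m J) ^\<^sub>m t) $$ (i, j) / of_nat (fact t)
      = (cos_coeff t *\<^sub>R x ^ t) * d + (sin_coeff t *\<^sub>R x ^ t) * g" for t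
    using ij J by (auto simp: power_smult_mat_square_minus_one[OF J JJ] cos_coeff_def sin_coeff_def
        d_def g_def scaleR_conv_of_real elim!: oddE)
  moreover have "(\<lambda>t. (cos_coeff t *\<^sub>R x ^ t) * d + (sin_coeff t *\<^sub>R x ^ t) * g) sums (cos x * d + sin x * g)"
    by (intro sums_add sums_mult2 cos_converges sin_converges)
  ultimately have "mexp (x \<cdot>\<^sub>m J) $$ (i, j) = cos x * d + sin x * g"
    using ij J by (simp add: mexp_def sums_iff)
  then show "mexp (x \<cdot>\<^sub>m J) $$ (i, j) = (cos x \<cdot>\<^sub>m 1\<^sub>m D + sin x \<cdot>\<^sub>m J) $$ (i, j)"
    using ij J by (simp add: d_def g_def)
qed (use J in \<open>auto simp: mexp_def\<close>)

lemma mult_lincomb_one_square_minus_one: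
  assumes J: "J \<in> carrier_mat D D" and JJ: "J * J = - 1\<^sub>m D"
  shows "(a \<cdot>\<^sub>m 1\<^sub>m D + b \<cdot>\<^sub>m J) * (c \<cdot>\<^sub>m 1\<^sub>m D + d \<cdot>\<^sub>m J)
       = (a * c - b * d :: complex) \<cdot>\<^sub>m 1\<^sub>m D + (a * d + b * c) \<cdot>\<^sub>m J"
  using J JJ
  by (simp add: add_mult_distrib_mat[of _ D D _ _ D] mult_add_distrib_mat[of _ D D _ D]
      mult_smult_distrib[of _ D D _ D] mult_smult_assoc_mat[of _ D D _ D])
    (intro eq_matI; auto simp: algebra_simps)

lemma commute_lincomb_one:
  fixes a b :: complex
  assumes J: "J \<in> carrier_mat D D" and C: "C \<in> carrier_mat D D" and CJ: "C * J = J * C"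
  shows "C * (a \<cdot>\<^sub>m 1\<^sub>m D + b \<cdot>\<^sub>m J) = (a \<cdot>\<^sub>m 1\<^sub>m D + b \<cdot>\<^sub>m J) * C"
  using J C CJ by (simp add: add_mult_distrib_mat[of _ D D _ _ D] mult_add_distrib_mat[of _ D D _ D]
      mult_smult_distrib[of _ D D _ D] mult_smult_assoc_mat[of _ D D _ D])

lemma conj_mexp_fixes_commuting:
  fixes x :: real
  assumes J: "J \<in> carrier_mat D D" and JJ: "J * J = - 1\<^sub>m D" and J_anti_hermitian: "dagger J = - J"
    and C: "C \<in> carrier_mat D D" and CJ: "C * J = J * C"
  shows "mexp (of_real x \<cdot>\<^sub>m J) * C * dagger (mexp (of_real x \<cdot>\<^sub>m J)) = C"
proof -
  define c s where "c = (of_real (cos x) :: complex)" and "s = (of_real (sin x) :: complex)"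
  define P Q where "P = c \<cdot>\<^sub>m 1\<^sub>m D + s \<cdot>\<^sub>m J" and "Q = c \<cdot>\<^sub>m 1\<^sub>m D + (- s) \<cdot>\<^sub>m J"
  have P: "P \<in> carrier_mat D D" and Q: "Q \<in> carrier_mat D D"
    unfolding P_def Q_def using J by auto
  have R: "mexp (of_real x \<cdot>\<^sub>m J) = P"
    unfolding P_def c_def s_def by (simp add: mexp_smult_square_minus_one[OF J JJ] cos_of_real sin_of_real)
  have P_dagger: "dagger P = Q"
    using J unfolding P_def Q_def c_def s_def
    by (simp add: dagger_add[of _ D D] dagger_smult dagger_one J_anti_hermitian)
      (auto simp: uminus_eq_smult_mat smult_smult_mat)
  have "c * c + s * s = 1"
    unfolding c_def s_def by (simp flip: of_real_mult of_real_add)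
  then have unitary: "P * Q = 1\<^sub>m D"
    unfolding P_def Q_def using J
    by (simp add: mult_lincomb_one_square_minus_one[OF J JJ] mult.commute) (rule eq_matI, auto)
  have "P * C = C * P"
    unfolding P_def by (rule commute_lincomb_one[OF J C CJ, symmetric])
  then have "P * C * Q = C * (P * Q)"
    using P Q C by simp
  then show ?thesis
    using C by (simp add: R P_dagger unitary)
qed

context
  fixes A B :: "complex mat" and D :: nat
  assumes A: "A \<in> carrier_mat D D" and B: "B \<in> carrier_mat D D"
    and AB_anticommute: "A * B = - (B * A)"
begin

lemma anticommuting_involutions_mult_square:
  assumes "A * A = 1\<^sub>m D" and "B * B = 1\<^sub>m D"
  shows "(A * B) * (A * B) = - 1\<^sub>m D"
proof -
  have BA: "B * A = - (A * B)"
    by (simp add: AB_anticommute)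
  have "(A * B) * (A * B) = A * ((B * A) * B)"
    using A B by (metis assoc_mult_mat mult_carrier_mat)
  also have "\<dots> = - (A * A * (B * B))"
    using A B by (simp add: BA assoc_mult_mat[OF A A mult_carrier_mat[OF B B]])
  finally show ?thesis
    using assms by simp
qed

lemma anticommuting_hermitian_mult_dagger:
  assumes "dagger A = A" and "dagger B = B"
  shows "dagger (A * B) = - (A * B)"
proof -
  have "B * A = - (A * B)"
    by (simp add: AB_anticommute)
  then show ?thesis
    using A B assms by (simp add: dagger_mult[OF A B])
qed

lemma commute_mult_of_anticommuting:
  assumes C: "C \<in> carrier_mat D D" and "C * A = - (A * C)" and "C * B = - (B * C)"
  shows "C * (A * B) = (A * B) * C"
proof -
  have "C * (A * B) = - (A * (C * B))"
    using A B C assms(2) by (simp flip: assoc_mult_mat[of C D D A D])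
  also have "\<dots> = A * B * C"
    using A B C assms(3) by simp
  finally show ?thesis .
qed

end

lemma conj_rotation_fixes_anticommuting:
  assumes A: "A \<in> carrier_mat D D" and B: "B \<in> carrier_mat D D" and C: "C \<in> carrier_mat D D"
    and AA: "A * A = 1\<^sub>m D" and BB: "B * B = 1\<^sub>m D" and hA: "dagger A = A" and hB: "dagger B = B"
    and AB: "A * B = - (B * A)" and CA: "C * A = - (A * C)" and CB: "C * B = - (B * C)"
  shows "mexp ((- \<i> * complex_of_real \<theta> / 2) \<cdot>\<^sub>m (\<i> \<cdot>\<^sub>m (A * B))) * C
           * dagger (mexp ((- \<i> * complex_of_real \<theta> / 2) \<cdot>\<^sub>m (\<i> \<cdot>\<^sub>m (A * B)))) = C"
proof -
  have "(- \<i> * complex_of_real \<theta> / 2) \<cdot>\<^sub>m (\<i> \<cdot>\<^sub>m (A * B))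
      = complex_of_real (\<theta> / 2) \<cdot>\<^sub>m (A * B)"
    by (simp add: smult_smult_mat mult.commute[of _ \<i>])
  then show ?thesis
    by (simp only:) (rule conj_mexp_fixes_commuting[OF mult_carrier_mat[OF A B]
        anticommuting_involutions_mult_square[OF A B AB AA BB]
        anticommuting_hermitian_mult_dagger[OF A B AB hA hB] C
        commute_mult_of_anticommuting[OF A B AB C CA CB]])
qed

lemma Rot_conj_W:
  assumes "2 \<le> n" "1 \<le> k" "k \<le> n" "1 \<le> m" "m < n" "1 \<le> j" "j \<le> n" "j \<noteq> m" "j \<noteq> m + 1"
  shows "Rot n k \<theta> m * W n k j * dagger (Rot n k \<theta> m) = W n k j"
proof -
  obtain a b where ab: "{a, b} = {m, m + 1}" and Gen: "Gen n k m = \<i> \<cdot>\<^sub>m (W n k a * W n k b)"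
    unfolding Gen_def by (metis insert_commute)
  have indices: "1 \<le> a" "a \<le> n" "1 \<le> b" "b \<le> n" "a \<noteq> b" "j \<noteq> a" "j \<noteq> b"
    using ab assms by (auto simp: doubleton_eq_iff)
  show ?thesis
    unfolding Rot_def Gen
    by (intro conj_rotation_fixes_anticommuting[where D = "2 ^ (n - 1)"] W_carrier W_square dagger_W W_anticommute)
      (use assms indices in auto)
qed

theorem lemma5:
  fixes n k :: nat and \<theta> :: real
  assumes "n \<ge> 2" and "1 \<le> k" and "k \<le> n"
  shows "(\<forall>m j. 1 \<le> m \<and> m < k \<and> m + 1 < j \<and> j \<le> n \<longrightarrow>
            Rot n k \<theta> m * W n k j * dagger (Rot n k \<theta> m) = W n k j)
       \<and> (\<forall>m j. k \<le> m \<and> m < n \<and> 1 \<le> j \<and> j < k \<longrightarrow>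
            Rot n k \<theta> m * W n k j * dagger (Rot n k \<theta> m) = W n k j)"
  using assms by (auto intro!: Rot_conj_W)

end
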